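(* Let $\alpha\in(0,1)$, let $a<T$ and $\lambda$ be positive real numbers, let $u_a\in\mathbb{R}$, and let $f:[a,T]\times\mathbb{R}^{+}\to\mathbb{R}^{+*}$ be continuous. For a function $w$ on $[a,T]$ write $$g(t,w(t)):=\frac{\lambda f(t,w(t))}{\left(\int_a^T f(x,w(x))\,dx\right)^2}.$$ If $(v,M)\in C^{(\alpha)}([a,T],\mathbb{R})\times C^{(\alpha)}([a,T],[0,\infty))$ is a tube solution of the nonlocal conformable fractional thermistor problem $$u^{(\alpha)}(t)=g(t,u(t)),\quad t\in[a,T],\qquad u(a)=u_a,$$ then this problem has a solution $u\in C^{(\alpha)}([a,T],\mathbb{R})$ satisfying $|u(t)-v(t)|\le M(t)$ for all $t\in[a,T]$.
   Context: Conformable fractional derivative: for $\alpha\in(0,1)$ and $h:[0,\infty)\to\mathbb{R}$, $h^{(\alpha)}(t):=\lim_{\epsilon\to0}\frac{h(t+\epsilon t^{1-\alpha})-h(t)}{\epsilon}$ for $t>0$; $h$ is $\alpha$-differentiable if this limit exists. $C^{(\alpha)}([a,T],X)$ denotes the set of functions $[a,T]\to X$ that are $\alpha$-differentiable with continuous $\alpha$-derivative. A pair $(v,M)\in C^{(\alpha)}([a,T],\mathbb{R})\times C^{(\alpha)}([a,T],[0,\infty))$ is a tube solution of $u^{(\alpha)}=g(t,u(t))$, $u(a)=u_a$, if: (i) $(y(t)-v(t))\,(g(t,y(t))-v^{(\alpha)}(t))\le M(t)M^{(\alpha)}(t)$ for every $t\in[a,T]$ and every function $y$ with $|y(t)-v(t)|=M(t)$;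 (ii) $v^{(\alpha)}(t)=g(t,v(t))$ and $M^{(\alpha)}(t)=0$ for all $t\in[a,T]$ with $M(t)=0$; (iii) $|u_a-v(a)|\le M(a)$.
   Formalization: f is continuous with strictly positive values on $[a,T]\times\mathbb{R}$ rather than a map $[a,T]\times\mathbb{R}^{+}\to\mathbb{R}^{+*}$, and in tube condition (i) y ranges only over functions continuous on $[a,T]$. Apart from conventions, each condition added here is assumed in the paper as well or is needed for the statement above to hold. *)

theory Defs
  imports "HOL-Analysis.Analysis"
begin

definition has_conf_deriv :: "real \<Rightarrow> (real \<Rightarrow> real) \<Rightarrow> real \<Rightarrow> real set \<Rightarrow> real \<Rightarrow> bool" where
  "has_conf_deriv \<alpha> h D S t \<longleftrightarrow>
     ((\<lambda>\<epsilon>. (h (t + \<epsilon> * t powr (1 - \<alpha>)) - h t) / \<epsilon>) \<longlongrightarrow> D)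
       (at 0 within {\<epsilon>. t + \<epsilon> * t powr (1 - \<alpha>) \<in> S})"

definition conf_deriv :: "real \<Rightarrow> real set \<Rightarrow> (real \<Rightarrow> real) \<Rightarrow> real \<Rightarrow> real" where
  "conf_deriv \<alpha> S h t =
     Lim (at 0 within {\<epsilon>. t + \<epsilon> * t powr (1 - \<alpha>) \<in> S})
         (\<lambda>\<epsilon>. (h (t + \<epsilon> * t powr (1 - \<alpha>)) - h t) / \<epsilon>)"

definition conf_C :: "real \<Rightarrow> real \<Rightarrow> real \<Rightarrow> real set \<Rightarrow> (real \<Rightarrow> real) \<Rightarrow> bool" where
  "conf_C \<alpha> a T X h \<longleftrightarrow>
     (\<forall>t\<in>{a..T}. h t \<in> X) \<and>
     (\<forall>t\<in>{a..T}. \<exists>D. has_conf_deriv \<alpha> h D {a..T} t) \<and>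
     continuous_on {a..T} (conf_deriv \<alpha> {a..T} h)"

text \<open>Tube solution for u^(alpha) = G(t,u), u(a) = ua, where the right-hand side
  G u t may depend nonlocally on the whole function u.\<close>
definition tube_solution ::
  "real \<Rightarrow> real \<Rightarrow> real \<Rightarrow> ((real \<Rightarrow> real) \<Rightarrow> real \<Rightarrow> real) \<Rightarrow> real
     \<Rightarrow> (real \<Rightarrow> real) \<Rightarrow> (real \<Rightarrow> real) \<Rightarrow> bool" where
  "tube_solution \<alpha> a T G ua v M \<longleftrightarrow>
     conf_C \<alpha> a T UNIV v \<and> conf_C \<alpha> a T {0..} M \<and>
     (\<forall>t\<in>{a..T}. \<forall>y. continuous_on {a..T} y \<and> \<bar>y t - v t\<bar> = M t \<longrightarrow>
        (y t - v t) * (G y t - conf_deriv \<alpha> {a..T} v t)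
          \<le> M t * conf_deriv \<alpha> {a..T} M t) \<and>
     (\<forall>t\<in>{a..T}. M t = 0 \<longrightarrow>
        conf_deriv \<alpha> {a..T} v t = G v t \<and> conf_deriv \<alpha> {a..T} M t = 0) \<and>
     \<bar>ua - v a\<bar> \<le> M a"

definition thermistor_rhs ::
  "real \<Rightarrow> (real \<Rightarrow> real \<Rightarrow> real) \<Rightarrow> real \<Rightarrow> real \<Rightarrow> (real \<Rightarrow> real) \<Rightarrow> real \<Rightarrow> real" where
  "thermistor_rhs lam f a T w t =
     lam * f t (w t) / (integral {a..T} (\<lambda>x. f x (w x)))\<^sup>2"

end

theory Submission
  imports Defs "HOL-Complex_Analysis.Great_Picard"
begin

text \<open>For \<open>t \<ge> a > 0\<close> the conformable derivative is the ordinary derivative times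
  \<open>t\<^sup>1\<^sup>-\<^sup>\<alpha>\<close>, so the problem is the integral equation
  \<open>u t = u\<^sub>a + \<integral>\<^sub>a\<^sup>t G u s / s\<^sup>1\<^sup>-\<^sup>\<alpha> ds\<close>.
  Projecting the argument of \<open>f\<close> onto the tube \<open>[v - M, v + M]\<close> and clamping the nonlocal factor
  \<open>\<lambda> / (\<integral>f)\<^sup>2\<close> to its a-priori range turns it into a bounded continuous problem
  \<open>u' t = H (\<Psi> u) t (u t)\<close>. That problem is solved with Euler polygons: for a fixed step the polygon
  depends continuously on the value \<open>K\<close> of the nonlocal factor, so the intermediate value theorem
  yields a polygon with \<open>\<Psi> P = K\<close>, and Arzela-Ascoli together with dominated convergence
  passes to the limit. The tube conditions then make \<open>\<sigma> (u - v) - M\<close> (\<open>\<sigma> = \<plusminus>1\<close>) nonincreasing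
  wherever it is positive, so the solution never leaves the tube, where the truncation is inactive.
  At zeros of \<open>M\<close>, condition (ii) only speaks about \<open>v\<close>; there condition (i), applied to
  continuous functions that spike to the tube boundary, shows that (unless \<open>M\<close> vanishes
  identically) the nonlocal integral of every continuous function equals that of \<open>v\<close>.\<close>

section \<open>Conformable and classical derivatives\<close>

lemma at_within_affine_image:
  fixes t c :: real
  assumes "c \<noteq> 0"
  shows "filtermap (\<lambda>\<epsilon>. t + \<epsilon> * c) (at 0 within {\<epsilon>. t + \<epsilon> * c \<in> S}) = at t within S"
proof -
  have "bij (\<lambda>\<epsilon>::real. t + \<epsilon> * c)"
    using assms unfolding bij_def inj_on_def surj_def
    by (auto intro!: exI[of _ "(_ - t) / c"])
  moreover have "(\<lambda>\<epsilon>. t + \<epsilon> * c) ` {\<epsilon>. t + \<epsilon> * c \<in> S} = S"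
    using assms by (auto simp: image_iff intro!: exI[of _ "(_ - t) / c"])
  moreover have "open ((\<lambda>\<epsilon>. t + \<epsilon> * c) ` U)" if "open U" for U
    using open_affinity[OF that assms, of t] by (simp add: mult.commute)
  moreover have "isCont (\<lambda>\<epsilon>. t + \<epsilon> * c) 0"
    by (intro continuous_intros)
  ultimately show ?thesis
    using filtermap_linear_at_within[of "\<lambda>\<epsilon>. t + \<epsilon> * c" 0 "{\<epsilon>. t + \<epsilon> * c \<in> S}"] by simp
qed

lemma has_conf_deriv_iff_has_real_derivative:
  assumes "0 < t"
  shows "has_conf_deriv \<alpha> h D S t \<longleftrightarrow> (h has_real_derivative D / t powr (1 - \<alpha>)) (at t within S)"
proof -
  define c where "c = t powr (1 - \<alpha>)"
  have c: "c > 0" using assms by (simp add: c_def)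
  define q where "q y = c * ((h y - h t) / (y - t))" for y
  have "\<forall>\<^sub>F \<epsilon> in at 0 within {\<epsilon>. t + \<epsilon> * c \<in> S}. (h (t + \<epsilon> * c) - h t) / \<epsilon> = q (t + \<epsilon> * c)"
    using c by (auto simp: eventually_at_filter q_def)
  then have "has_conf_deriv \<alpha> h D S t \<longleftrightarrow> ((\<lambda>\<epsilon>. q (t + \<epsilon> * c)) \<longlongrightarrow> D) (at 0 within {\<epsilon>. t + \<epsilon> * c \<in> S})"
    unfolding has_conf_deriv_def c_def[symmetric] by (rule tendsto_cong)
  also have "\<dots> \<longleftrightarrow> (q \<longlongrightarrow> D) (filtermap (\<lambda>\<epsilon>. t + \<epsilon> * c) (at 0 within {\<epsilon>. t + \<epsilon> * c \<in> S}))"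
    by (simp add: filterlim_def filtermap_filtermap)
  also have "\<dots> \<longleftrightarrow> (q \<longlongrightarrow> D) (at t within S)"
    using c by (simp add: at_within_affine_image)
  also have "\<dots> \<longleftrightarrow> ((\<lambda>y. (h y - h t) / (y - t)) \<longlongrightarrow> D / c) (at t within S)"
    using tendsto_mult_left_iff[of c "\<lambda>y. (h y - h t) / (y - t)" "D / c"] c
    unfolding q_def by simp
  finally show ?thesis by (simp add: has_field_derivative_iff c_def)
qed

lemma conf_deriv_eqI:
  assumes "0 < t" "t islimpt S" "has_conf_deriv \<alpha> h D S t"
  shows "conf_deriv \<alpha> S h t = D"
proof -
  let ?F = "at 0 within {\<epsilon>. t + \<epsilon> * t powr (1 - \<alpha>) \<in> S}"
  have "filtermap (\<lambda>\<epsilon>. t + \<epsilon> * t powr (1 - \<alpha>)) ?F \<noteq> bot"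
    using assms(1,2) by (simp add: at_within_affine_image trivial_limit_within)
  then have "\<not> trivial_limit ?F"
    by (simp add: filtermap_bot_iff)
  then show ?thesis
    using assms(3) unfolding conf_deriv_def has_conf_deriv_def by (rule tendsto_Lim)
qed

lemma conf_C_has_real_derivative:
  assumes "0 < a" "a < T" "conf_C \<alpha> a T X h" "t \<in> {a..T}"
  shows "(h has_real_derivative conf_deriv \<alpha> {a..T} h t / t powr (1 - \<alpha>)) (at t within {a..T})"
proof -
  obtain D where D: "has_conf_deriv \<alpha> h D {a..T} t"
    using assms(3,4) unfolding conf_C_def by blast
  moreover have "conf_deriv \<alpha> {a..T} h t = D"
    using assms(1,2,4) D by (intro conf_deriv_eqI) auto
  ultimately show ?thesis
    using assms(1,4) by (simp add: has_conf_deriv_iff_has_real_derivative)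
qed

lemma conf_C_continuous_on:
  assumes "0 < a" "a < T" "conf_C \<alpha> a T X h"
  shows "continuous_on {a..T} h"
  unfolding continuous_on_eq_continuous_within
  using conf_C_has_real_derivative[OF assms] DERIV_continuous by blast

lemma conf_C_UNIV_conf_deriv_eqI:
  assumes "0 < a" "a < T" "continuous_on {a..T} g"
    and "\<And>t. t \<in> {a..T} \<Longrightarrow> (h has_real_derivative g t / t powr (1 - \<alpha>)) (at t within {a..T})"
  shows "conf_C \<alpha> a T UNIV h" "\<And>t. t \<in> {a..T} \<Longrightarrow> conf_deriv \<alpha> {a..T} h t = g t"
proof -
  have conf: "has_conf_deriv \<alpha> h (g t) {a..T} t" if "t \<in> {a..T}" for t
    using assms(4)[OF that] assms(1) that
    by (subst has_conf_deriv_iff_has_real_derivative) auto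
  show eq: "conf_deriv \<alpha> {a..T} h t = g t" if "t \<in> {a..T}" for t
    using assms(1,2) that by (intro conf_deriv_eqI conf) auto
  show "conf_C \<alpha> a T UNIV h"
    unfolding conf_C_def using conf continuous_on_eq[OF assms(3)] eq by (auto simp del: atLeastAtMost_iff)
qed

lemma integral_equation_has_real_derivative:
  fixes g u :: "real \<Rightarrow> real"
  assumes "continuous_on {a..T} g" "\<And>t. t \<in> {a..T} \<Longrightarrow> u t = c + integral {a..t} g" "t \<in> {a..T}"
  shows "(u has_real_derivative g t) (at t within {a..T})"
proof -
  have "((\<lambda>t. c + integral {a..t} g) has_real_derivative g t) (at t within {a..T})"
    using integral_has_real_derivative[OF assms(1,3)] by (auto intro: derivative_eq_intros)
  then show ?thesis
    by (rule has_field_derivative_transform_within[OF _ zero_less_one assms(3)]) (simp add: assms(2))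
qed

lemma DERIV_nonpos_where_pos_imp_nonpos:
  fixes r :: "real \<Rightarrow> real"
  assumes "a \<le> t" "continuous_on {a..t} r" "r a \<le> 0"
    and "\<And>s. a < s \<Longrightarrow> s < t \<Longrightarrow> r s > 0 \<Longrightarrow> \<exists>D. (r has_real_derivative D) (at s) \<and> D \<le> 0"
  shows "r t \<le> 0"
proof (rule ccontr)
  assume "\<not> r t \<le> 0"
  define Z where "Z = {s \<in> {a..t}. r s \<le> 0}"
  have "compact Z"
    unfolding compact_eq_bounded_closed Z_def using assms(2)
    by (intro conjI bounded_subset[OF bounded_closed_interval] continuous_on_closed_Collect_le) auto
  moreover have "a \<in> Z"
    using assms(1,3) by (simp add: Z_def)
  ultimately obtain s0 where s0: "s0 \<in> Z" and max: "\<And>s. s \<in> Z \<Longrightarrow> s \<le> s0"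
    using compact_attains_sup[of Z] by blast
  have pos: "r s > 0" if "s0 < s" "s \<le> t" for s
    using max[of s] that s0 by (force simp: Z_def)
  have "r t \<le> r s0"
  proof (rule DERIV_nonpos_imp_decreasing_open[of s0 t r])
    show "continuous_on {s0..t} r"
      using s0 by (auto simp: Z_def intro: continuous_on_subset[OF assms(2)])
  next
    fix x assume "s0 < x" "x < t"
    then show "\<exists>D. (r has_real_derivative D) (at x) \<and> D \<le> 0"
      using s0 pos assms(4) by (auto simp: Z_def)
  qed (use s0 in \<open>simp add: Z_def\<close>)
  then show False
    using s0 \<open>\<not> r t \<le> 0\<close> by (simp add: Z_def)
qed

section \<open>Euler polygons\<close>

lemma continuous_on_compose_uncurry3:
  assumes "continuous_on UNIV (\<lambda>(k, s, x). H k s x)"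
    and "continuous_on S p" "continuous_on S q" "continuous_on S r"
  shows "continuous_on S (\<lambda>y. H (p y) (q y) (r y))"
  using continuous_on_compose2[OF assms(1), of S "\<lambda>y. (p y, q y, r y)"] assms(2-4)
  by (simp add: continuous_on_Pair)

lemma sum_ramps_on_cell:
  fixes c :: "nat \<Rightarrow> real"
  assumes "\<delta> > 0" "j < N" "a + real j * \<delta> \<le> t" "t \<le> a + real (Suc j) * \<delta>"
  shows "(\<Sum>k<N. c k * max 0 (min \<delta> (t - (a + real k * \<delta>)))) =
    (\<Sum>k<j. c k * \<delta>) + c j * (t - (a + real j * \<delta>))"
proof -
  define r where "r k = (if k < j then \<delta> else if k = j then t - (a + real j * \<delta>) else 0)" for k
  have ramp: "max 0 (min \<delta> (t - (a + real k * \<delta>))) = r k" for k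
  proof (cases k j rule: linorder_cases)
    case less
    then have "(real k + 1) * \<delta> \<le> real j * \<delta>"
      using assms(1) by (intro mult_right_mono) auto
    then show ?thesis
      using less assms(1,3) by (simp add: r_def algebra_simps)
  next
    case greater
    then have "(real j + 1) * \<delta> \<le> real k * \<delta>"
      using assms(1) by (intro mult_right_mono) auto
    then show ?thesis
      using greater assms(4) by (simp add: r_def algebra_simps)
  qed (use assms(3,4) in \<open>simp add: r_def algebra_simps\<close>)
  have "{..<N} = {..<j} \<union> {j..<N}" "{..<j} \<inter> {j..<N} = {}"
    using assms(2) by auto
  then have "(\<Sum>k<N. c k * r k) = (\<Sum>k<j. c k * r k) + (\<Sum>k\<in>{j..<N}. c k * r k)"
    by (simp add: sum.union_disjoint)
  also have "(\<Sum>k<j. c k * r k) = (\<Sum>k<j. c k * \<delta>)"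
    by (simp add: r_def)
  also have "(\<Sum>k\<in>{j..<N}. c k * r k) = (\<Sum>k\<in>{j..<N}. if k = j then c j * r j else 0)"
    by (rule sum.cong) (auto simp: r_def)
  also have "\<dots> = c j * (t - (a + real j * \<delta>))"
    using assms(2) by (simp add: r_def)
  finally show ?thesis
    by (simp add: ramp)
qed

primrec euler_node :: "(real \<Rightarrow> real \<Rightarrow> real) \<Rightarrow> real \<Rightarrow> real \<Rightarrow> real \<Rightarrow> nat \<Rightarrow> real" where
  "euler_node F a \<delta> u0 0 = u0"
| "euler_node F a \<delta> u0 (Suc k) =
     euler_node F a \<delta> u0 k + \<delta> * F (a + real k * \<delta>) (euler_node F a \<delta> u0 k)"

text \<open>Written as a sum of ramps, so that continuity in \<open>t\<close> and in \<open>F\<close> is evident.\<close>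
definition euler_polygon :: "(real \<Rightarrow> real \<Rightarrow> real) \<Rightarrow> real \<Rightarrow> real \<Rightarrow> real \<Rightarrow> nat \<Rightarrow> real \<Rightarrow> real" where
  "euler_polygon F a \<delta> u0 N t = u0 +
     (\<Sum>k<N. F (a + real k * \<delta>) (euler_node F a \<delta> u0 k) * max 0 (min \<delta> (t - (a + real k * \<delta>))))"

lemma euler_node_eq_sum:
  "euler_node F a \<delta> u0 j = u0 + (\<Sum>k<j. F (a + real k * \<delta>) (euler_node F a \<delta> u0 k) * \<delta>)"
  by (induction j) (auto simp: algebra_simps)

lemma euler_polygon_on_cell:
  assumes "\<delta> > 0" "j < N" "a + real j * \<delta> \<le> t" "t \<le> a + real (Suc j) * \<delta>"
  shows "euler_polygon F a \<delta> u0 N t =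
    euler_node F a \<delta> u0 j + F (a + real j * \<delta>) (euler_node F a \<delta> u0 j) * (t - (a + real j * \<delta>))"
  unfolding euler_polygon_def sum_ramps_on_cell[OF assms] euler_node_eq_sum[of F a \<delta> u0 j] by simp

lemma euler_polygon_start:
  assumes "\<delta> > 0"
  shows "euler_polygon F a \<delta> u0 N a = u0"
proof -
  have "max 0 (min \<delta> (a - (a + real k * \<delta>))) = 0" for k
  proof -
    have "a - (a + real k * \<delta>) \<le> 0"
      using assms by simp
    then show ?thesis
      by (simp add: min_def max_def)
  qed
  then show ?thesis
    by (simp add: euler_polygon_def)
qed

lemma continuous_on_euler_polygon: "continuous_on S (euler_polygon F a \<delta> u0 N)"
  unfolding euler_polygon_def by (intro continuous_intros)

lemma continuous_on_euler_polygon_param: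
  assumes "continuous_on UNIV (\<lambda>(K, s, x). H K s x)"
  shows "continuous_on UNIV (\<lambda>K. euler_polygon (H K) a \<delta> u0 N t)"
proof -
  have node: "continuous_on UNIV (\<lambda>K. euler_node (H K) a \<delta> u0 k)" for k
    by (induction k) (auto intro!: continuous_intros continuous_on_compose_uncurry3[OF assms])
  show ?thesis
    unfolding euler_polygon_def
    by (intro continuous_intros continuous_on_compose_uncurry3[OF assms] node)
qed

lemma grid_cell_exists:
  assumes "\<delta> > 0" "0 < N" "a \<le> t" "t \<le> a + real N * \<delta>"
  obtains j where "j < N" "a + real j * \<delta> \<le> t" "t \<le> a + real (Suc j) * \<delta>"
proof -
  define j where "j = min (N - 1) (nat \<lfloor>(t - a) / \<delta>\<rfloor>)"
  have "0 \<le> (t - a) / \<delta>" "(t - a) / \<delta> \<le> real N"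
    using assms by (simp_all add: divide_le_eq algebra_simps)
  then have "real j \<le> (t - a) / \<delta>" "(t - a) / \<delta> \<le> real j + 1"
    using assms(2) unfolding j_def by linarith+
  then have "a + real j * \<delta> \<le> t" "t \<le> a + real (Suc j) * \<delta>"
    using assms(1) by (simp_all add: le_divide_eq divide_le_eq algebra_simps)
  moreover have "j < N"
    using assms(2) by (simp add: j_def)
  ultimately show ?thesis
    using that by blast
qed

lemma grid_open_cell_exists:
  assumes "\<delta> > 0" "0 < N" "a \<le> t" "t \<le> a + real N * \<delta>"
    and "t \<notin> (\<lambda>k. a + real k * \<delta>) ` {..N}"
  obtains j where "j < N" "a + real j * \<delta> < t" "t < a + real (Suc j) * \<delta>"
proof -
  obtain j where j: "j < N" "a + real j * \<delta> \<le> t" "t \<le> a + real (Suc j) * \<delta>"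
    using grid_cell_exists[OF assms(1-4)] .
  have "a + real j * \<delta> \<in> (\<lambda>k. a + real k * \<delta>) ` {..N}"
    "a + real (Suc j) * \<delta> \<in> (\<lambda>k. a + real k * \<delta>) ` {..N}"
    using j(1) by (intro image_eqI[OF refl]; simp)+
  then have "t \<noteq> a + real j * \<delta>" "t \<noteq> a + real (Suc j) * \<delta>"
    using assms(5) by auto
  then show ?thesis
    using that j by simp
qed

lemma euler_polygon_has_real_derivative:
  assumes "\<delta> > 0" "j < N" "a + real j * \<delta> < t" "t < a + real (Suc j) * \<delta>"
  shows "(euler_polygon F a \<delta> u0 N has_real_derivative F (a + real j * \<delta>) (euler_node F a \<delta> u0 j)) (at t)"
proof -
  let ?c = "F (a + real j * \<delta>) (euler_node F a \<delta> u0 j)"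
  have "((\<lambda>t. euler_node F a \<delta> u0 j + ?c * (t - (a + real j * \<delta>))) has_real_derivative ?c) (at t)"
    by (auto intro!: derivative_eq_intros)
  then show ?thesis
    by (rule has_field_derivative_transform_within_open[of _ _ _ "{a + real j * \<delta> <..< a + real (Suc j) * \<delta>}"])
      (use assms in \<open>auto simp: euler_polygon_on_cell\<close>)
qed

lemma abs_diff_le_of_DERIV_bound:
  fixes f :: "real \<Rightarrow> real"
  assumes "finite E" "s \<le> t" "0 \<le> L" "continuous_on {s..t} f"
    and "\<And>x. x \<in> {s..t} - E \<Longrightarrow> \<exists>D. (f has_real_derivative D) (at x) \<and> \<bar>D\<bar> \<le> L"
  shows "\<bar>f t - f s\<bar> \<le> L * (t - s)"
proof -
  obtain f' where f': "\<And>x. x \<in> {s..t} - E \<Longrightarrow> (f has_real_derivative f' x) (at x) \<and> \<bar>f' x\<bar> \<le> L"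
    using assms(5) by metis
  have int: "(f' has_integral (f t - f s)) {s..t}"
    using f' assms(4) by (intro fundamental_theorem_of_calculus_strong[OF assms(1,2)])
      (auto simp: has_real_derivative_iff_has_vector_derivative[symmetric])
  show ?thesis
    using has_integral_bound_real[OF assms(3,1) int] f' assms(2) by simp
qed

lemma euler_polygon_lipschitz:
  assumes "\<delta> > 0" "0 < N" "\<And>s x. \<bar>F s x\<bar> \<le> B"
    and "a \<le> s" "s \<le> t" "t \<le> a + real N * \<delta>"
  shows "\<bar>euler_polygon F a \<delta> u0 N t - euler_polygon F a \<delta> u0 N s\<bar> \<le> B * (t - s)"
proof (rule abs_diff_le_of_DERIV_bound[of "(\<lambda>k. a + real k * \<delta>) ` {..N}"])
  fix x assume x: "x \<in> {s..t} - (\<lambda>k. a + real k * \<delta>) ` {..N}"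
  have "a \<le> x" "x \<le> a + real N * \<delta>" "x \<notin> (\<lambda>k. a + real k * \<delta>) ` {..N}"
    using x assms(4-6) by auto
  then obtain j where "j < N" "a + real j * \<delta> < x" "x < a + real (Suc j) * \<delta>"
    by (rule grid_open_cell_exists[OF assms(1,2)])
  then show "\<exists>D. (euler_polygon F a \<delta> u0 N has_real_derivative D) (at x) \<and> \<bar>D\<bar> \<le> B"
    using euler_polygon_has_real_derivative[OF assms(1)] assms(3) by blast
qed (use assms(3)[of 0 0] assms(5) in \<open>auto intro: continuous_on_euler_polygon\<close>)

lemma euler_polygon_bounded:
  assumes "\<delta> > 0" "0 < N" "\<And>s x. \<bar>F s x\<bar> \<le> B" "x \<in> {a..a + real N * \<delta>}"
  shows "\<bar>euler_polygon F a \<delta> u0 N x\<bar> \<le> \<bar>u0\<bar> + B * (real N * \<delta>)"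
proof -
  have "\<bar>euler_polygon F a \<delta> u0 N x - euler_polygon F a \<delta> u0 N a\<bar> \<le> B * (x - a)"
    using assms(4) by (intro euler_polygon_lipschitz[OF assms(1-3)]) auto
  moreover have "B * (x - a) \<le> B * (real N * \<delta>)"
    using assms(3)[of 0 0] assms(4) by (intro mult_left_mono) auto
  ultimately show ?thesis
    using assms(1) by (simp add: euler_polygon_start)
qed

lemma euler_polygon_integral_error:
  assumes "\<delta> > 0" "0 < N" "continuous_on UNIV (\<lambda>(s, x). F s x)" "0 \<le> \<omega>"
    and "\<And>j x. j < N \<Longrightarrow> a + real j * \<delta> < x \<Longrightarrow> x < a + real (Suc j) * \<delta> \<Longrightarrow>
       \<bar>F (a + real j * \<delta>) (euler_node F a \<delta> u0 j) - F x (euler_polygon F a \<delta> u0 N x)\<bar> \<le> \<omega>"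
    and "a \<le> t" "t \<le> a + real N * \<delta>"
  shows "\<bar>euler_polygon F a \<delta> u0 N t - u0 - integral {a..t} (\<lambda>s. F s (euler_polygon F a \<delta> u0 N s))\<bar>
    \<le> \<omega> * (t - a)"
proof -
  let ?P = "euler_polygon F a \<delta> u0 N"
  let ?T = "a + real N * \<delta>"
  define err where "err x = ?P x - integral {a..x} (\<lambda>s. F s (?P s))" for x
  have "continuous_on UNIV (\<lambda>s. F s (?P s))"
    using continuous_on_compose2[OF assms(3), of UNIV "\<lambda>s. (s, ?P s)"]
    by (simp add: continuous_on_Pair continuous_on_euler_polygon)
  then have int_deriv: "((\<lambda>x. integral {a..x} (\<lambda>s. F s (?P s))) has_real_derivative F x (?P x))
      (at x within {a..?T})" if "x \<in> {a..?T}" for x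
    using that by (intro integral_has_real_derivative) (auto intro: continuous_on_subset)
  have int_cont: "continuous_on {a..?T} (\<lambda>x. integral {a..x} (\<lambda>s. F s (?P s)))"
    unfolding continuous_on_eq_continuous_within using int_deriv DERIV_continuous by blast
  have grid: "a + real 0 * \<delta> \<in> (\<lambda>k. a + real k * \<delta>) ` {..N}" "?T \<in> (\<lambda>k. a + real k * \<delta>) ` {..N}"
    by (intro image_eqI[OF refl]; simp)+
  have "\<bar>err t - err a\<bar> \<le> \<omega> * (t - a)"
  proof (rule abs_diff_le_of_DERIV_bound[of "(\<lambda>k. a + real k * \<delta>) ` {..N}"])
    show "continuous_on {a..t} err"
      unfolding err_def using assms(7)
      by (intro continuous_on_diff continuous_on_euler_polygon continuous_on_subset[OF int_cont]) auto
    fix x assume x: "x \<in> {a..t} - (\<lambda>k. a + real k * \<delta>) ` {..N}"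
    have x': "a \<le> x" "x \<le> ?T" "x \<notin> (\<lambda>k. a + real k * \<delta>) ` {..N}"
      using x assms(7) by auto
    then obtain j where j: "j < N" "a + real j * \<delta> < x" "x < a + real (Suc j) * \<delta>"
      by (rule grid_open_cell_exists[OF assms(1,2)])
    have "a < x" "x < ?T"
      using x' grid by (auto simp: order_le_less)
    then have "((\<lambda>x. integral {a..x} (\<lambda>s. F s (?P s))) has_real_derivative F x (?P x)) (at x)"
      using int_deriv[of x] by (simp add: at_within_Icc_at)
    then have "(err has_real_derivative F (a + real j * \<delta>) (euler_node F a \<delta> u0 j) - F x (?P x)) (at x)"
      unfolding err_def by (intro DERIV_diff euler_polygon_has_real_derivative[OF assms(1) j])
    then show "\<exists>D. (err has_real_derivative D) (at x) \<and> \<bar>D\<bar> \<le> \<omega>"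
      using assms(5)[OF j] by blast
  qed (use assms(4,6) in auto)
  moreover have "err a = u0"
    using assms(1) by (simp add: err_def euler_polygon_start)
  ultimately show ?thesis
    by (simp add: err_def)
qed

lemma euler_polygon_cell_oscillation_le:
  assumes "\<delta> > 0" "0 < N" "\<And>s x. \<bar>F s x\<bar> \<le> B"
    and "\<And>x. x \<in> {a..a + real N * \<delta>} \<Longrightarrow> \<bar>euler_polygon F a \<delta> u0 N x\<bar> \<le> R"
    and "\<And>s x s' x'. s \<in> {a..a + real N * \<delta>} \<Longrightarrow> s' \<in> {a..a + real N * \<delta>} \<Longrightarrow>
      \<bar>x\<bar> \<le> R \<Longrightarrow> \<bar>x'\<bar> \<le> R \<Longrightarrow> \<bar>s - s'\<bar> + \<bar>x - x'\<bar> \<le> (1 + B) * \<delta> \<Longrightarrow> \<bar>F s x - F s' x'\<bar> \<le> \<omega>"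
    and "j < N" "a + real j * \<delta> < x" "x < a + real (Suc j) * \<delta>"
  shows "\<bar>F (a + real j * \<delta>) (euler_node F a \<delta> u0 j) - F x (euler_polygon F a \<delta> u0 N x)\<bar> \<le> \<omega>"
proof -
  let ?P = "euler_polygon F a \<delta> u0 N" and ?s = "a + real j * \<delta>"
  have node: "euler_node F a \<delta> u0 j = ?P ?s"
    using assms(1,6) by (simp add: euler_polygon_on_cell)
  have "real j * \<delta> \<ge> 0" "real (Suc j) * \<delta> \<le> real N * \<delta>"
    using assms(1,6) by (auto intro: mult_right_mono)
  then have in_grid: "?s \<in> {a..a + real N * \<delta>}" "x \<in> {a..a + real N * \<delta>}"
    using assms(7,8) by auto
  have "\<bar>?P x - ?P ?s\<bar> \<le> B * (x - ?s)"
    using in_grid assms(7) by (intro euler_polygon_lipschitz[OF assms(1,2,3)]) auto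
  also have "\<dots> \<le> B * \<delta>"
    using assms(3)[of 0 0] assms(8) by (intro mult_left_mono) (auto simp: algebra_simps)
  finally have "\<bar>?s - x\<bar> + \<bar>?P ?s - ?P x\<bar> \<le> (1 + B) * \<delta>"
    using assms(7,8) by (simp add: algebra_simps abs_minus_commute)
  then show ?thesis
    unfolding node using assms(4,5) in_grid by blast
qed

lemma uniform_modulus_param:
  fixes H :: "real \<Rightarrow> real \<Rightarrow> real \<Rightarrow> real"
  assumes "continuous_on UNIV (\<lambda>(K, s, x). H K s x)" "0 < \<omega>"
  obtains d where "0 < d" "\<And>K s x s' x'. K \<in> {K1..K2} \<Longrightarrow> s \<in> {a..T} \<Longrightarrow> s' \<in> {a..T} \<Longrightarrow>
    \<bar>x\<bar> \<le> R \<Longrightarrow> \<bar>x'\<bar> \<le> R \<Longrightarrow> \<bar>s - s'\<bar> + \<bar>x - x'\<bar> < d \<Longrightarrow> \<bar>H K s x - H K s' x'\<bar> \<le> \<omega>"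
proof -
  let ?C = "{K1..K2} \<times> {a..T} \<times> {-R..R}"
  have "uniformly_continuous_on ?C (\<lambda>(K, s, x). H K s x)"
    by (intro compact_uniformly_continuous continuous_on_subset[OF assms(1)] compact_Times compact_Icc) auto
  then obtain d where "0 < d" and d: "\<And>z z'. z \<in> ?C \<Longrightarrow> z' \<in> ?C \<Longrightarrow> dist z' z < d \<Longrightarrow>
      dist ((\<lambda>(K, s, x). H K s x) z') ((\<lambda>(K, s, x). H K s x) z) < \<omega>"
    unfolding uniformly_continuous_on_def using assms(2) by metis
  have "\<bar>H K s x - H K s' x'\<bar> \<le> \<omega>"
    if "K \<in> {K1..K2}" "s \<in> {a..T}" "s' \<in> {a..T}" "\<bar>x\<bar> \<le> R" "\<bar>x'\<bar> \<le> R" "\<bar>s - s'\<bar> + \<bar>x - x'\<bar> < d"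
    for K s x s' x'
  proof -
    have "dist (K, s, x) (K, s', x') = norm (s - s', x - x')"
      by (simp add: dist_norm)
    also have "\<dots> \<le> \<bar>s - s'\<bar> + \<bar>x - x'\<bar>"
      using norm_Pair_le[of "s - s'" "x - x'"] by simp
    finally have "dist (K, s, x) (K, s', x') < d"
      using that(6) by linarith
    then show ?thesis
      using d[of "(K, s', x')" "(K, s, x)"] that(1-5) by (auto simp: dist_real_def abs_le_iff)
  qed
  with \<open>0 < d\<close> show ?thesis
    using that by blast
qed

lemma euler_polygon_integral_error_uniform:
  fixes H :: "real \<Rightarrow> real \<Rightarrow> real \<Rightarrow> real" and u0 :: real
  assumes "a < T" "continuous_on UNIV (\<lambda>(K, s, x). H K s x)" "\<And>K s x. \<bar>H K s x\<bar> \<le> B" "0 < \<omega>"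
  obtains d where "0 < d" "\<And>K N t. K \<in> {K1..K2} \<Longrightarrow> 0 < N \<Longrightarrow> (1 + B) * ((T - a) / real N) < d \<Longrightarrow>
    t \<in> {a..T} \<Longrightarrow> \<bar>euler_polygon (H K) a ((T - a) / real N) u0 N t - u0
      - integral {a..t} (\<lambda>s. H K s (euler_polygon (H K) a ((T - a) / real N) u0 N s))\<bar> \<le> \<omega> * (T - a)"
proof -
  define R where "R = \<bar>u0\<bar> + B * (T - a)"
  obtain d where "0 < d" and d: "\<And>K s x s' x'. K \<in> {K1..K2} \<Longrightarrow> s \<in> {a..T} \<Longrightarrow> s' \<in> {a..T} \<Longrightarrow>
      \<bar>x\<bar> \<le> R \<Longrightarrow> \<bar>x'\<bar> \<le> R \<Longrightarrow> \<bar>s - s'\<bar> + \<bar>x - x'\<bar> < d \<Longrightarrow> \<bar>H K s x - H K s' x'\<bar> \<le> \<omega>"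
    using uniform_modulus_param[OF assms(2,4)] by metis
  have "\<bar>euler_polygon (H K) a \<delta> u0 N t - u0 - integral {a..t} (\<lambda>s. H K s (euler_polygon (H K) a \<delta> u0 N s))\<bar>
      \<le> \<omega> * (T - a)"
    if K: "K \<in> {K1..K2}" and N: "0 < N" and small: "(1 + B) * \<delta> < d" and t: "t \<in> {a..T}"
      and \<delta>_def: "\<delta> = (T - a) / real N" for K N t \<delta>
  proof -
    have \<delta>: "0 < \<delta>" "a + real N * \<delta> = T" "real N * \<delta> = T - a"
      using assms(1) N by (simp_all add: \<delta>_def)
    have P_bound: "\<bar>euler_polygon (H K) a \<delta> u0 N x\<bar> \<le> R" if "x \<in> {a..a + real N * \<delta>}" for x
      using euler_polygon_bounded[where F = "H K", OF \<delta>(1) N assms(3) that] by (simp only: \<delta>(3) R_def)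
    have "continuous_on UNIV (\<lambda>(s, x). H K s x)"
      using continuous_on_compose_uncurry3[OF assms(2), of UNIV "\<lambda>_. K" fst snd]
      by (simp add: split_def continuous_on_fst continuous_on_snd)
    then have "\<bar>euler_polygon (H K) a \<delta> u0 N t - u0 - integral {a..t} (\<lambda>s. H K s (euler_polygon (H K) a \<delta> u0 N s))\<bar>
        \<le> \<omega> * (t - a)"
      using assms(4) t \<delta>(2) small K P_bound
      by (intro euler_polygon_integral_error[OF \<delta>(1) N]
          euler_polygon_cell_oscillation_le[where F = "H K", OF \<delta>(1) N assms(3)] d)
        (auto simp: less_imp_le)
    also have "\<dots> \<le> \<omega> * (T - a)"
      using t assms(4) by (intro mult_left_mono) auto
    finally show ?thesis .
  qed
  with \<open>0 < d\<close> show ?thesis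
    using that by blast
qed

lemma euler_polygon_integral_error_tendsto_zero:
  fixes H :: "real \<Rightarrow> real \<Rightarrow> real \<Rightarrow> real" and K :: "nat \<Rightarrow> real" and u0 :: real
  assumes "a < T" "continuous_on UNIV (\<lambda>(K, s, x). H K s x)" "\<And>K s x. \<bar>H K s x\<bar> \<le> B"
    and "\<And>n. K n \<in> {K1..K2}" "t \<in> {a..T}"
  defines "P n \<equiv> euler_polygon (H (K n)) a ((T - a) / real (Suc n)) u0 (Suc n)"
  shows "(\<lambda>n. P n t - u0 - integral {a..t} (\<lambda>s. H (K n) s (P n s))) \<longlonglongrightarrow> 0"
  unfolding tendsto_iff dist_real_def
proof (intro allI impI)
  fix e :: real assume "0 < e"
  define \<omega> where "\<omega> = e / (2 * (T - a))"
  have "0 < \<omega>" "\<omega> * (T - a) < e"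
    using \<open>0 < e\<close> assms(1) by (simp_all add: \<omega>_def field_simps)
  then obtain d where "0 < d" and d: "\<And>K N t. K \<in> {K1..K2} \<Longrightarrow> 0 < N \<Longrightarrow>
      (1 + B) * ((T - a) / real N) < d \<Longrightarrow> t \<in> {a..T} \<Longrightarrow>
      \<bar>euler_polygon (H K) a ((T - a) / real N) u0 N t - u0 - integral {a..t}
        (\<lambda>s. H K s (euler_polygon (H K) a ((T - a) / real N) u0 N s))\<bar> \<le> \<omega> * (T - a)"
    using euler_polygon_integral_error_uniform[OF assms(1-3), of \<omega> K1 K2 u0] by blast
  have "(\<lambda>n. (1 + B) * (T - a) * inverse (real (Suc n))) \<longlonglongrightarrow> 0"
    by (intro tendsto_mult_right_zero LIMSEQ_inverse_real_of_nat)
  then have "(\<lambda>n. (1 + B) * ((T - a) / real (Suc n))) \<longlonglongrightarrow> 0"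
    by (simp add: divide_inverse mult.assoc)
  from order_tendstoD(2)[OF this \<open>0 < d\<close>]
  show "\<forall>\<^sub>F n in sequentially. \<bar>P n t - u0 - integral {a..t} (\<lambda>s. H (K n) s (P n s)) - 0\<bar> < e"
  proof (rule eventually_mono)
    fix n assume "(1 + B) * ((T - a) / real (Suc n)) < d"
    from d[OF assms(4)[of n] zero_less_Suc this assms(5)]
    show "\<bar>P n t - u0 - integral {a..t} (\<lambda>s. H (K n) s (P n s)) - 0\<bar> < e"
      using \<open>\<omega> * (T - a) < e\<close> by (simp add: P_def)
  qed
qed

section \<open>A Peano theorem for nonlocal integral equations\<close>

definition pointwise_seq_continuous :: "real set \<Rightarrow> ((real \<Rightarrow> real) \<Rightarrow> real) \<Rightarrow> bool" where
  "pointwise_seq_continuous S \<Psi> \<longleftrightarrow>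
     (\<forall>U u. (\<forall>n. continuous_on S (U n)) \<and> continuous_on S u \<and> (\<forall>x\<in>S. (\<lambda>n. U n x) \<longlonglongrightarrow> u x)
        \<longrightarrow> (\<lambda>n. \<Psi> (U n)) \<longlonglongrightarrow> \<Psi> u)"

lemma pointwise_seq_continuousI:
  assumes "\<And>U u. (\<And>n. continuous_on S (U n)) \<Longrightarrow> continuous_on S u \<Longrightarrow>
    (\<And>x. x \<in> S \<Longrightarrow> (\<lambda>n. U n x) \<longlonglongrightarrow> u x) \<Longrightarrow> (\<lambda>n. \<Psi> (U n)) \<longlonglongrightarrow> \<Psi> u"
  shows "pointwise_seq_continuous S \<Psi>"
  using assms unfolding pointwise_seq_continuous_def by blast

lemma pointwise_seq_continuousD:
  assumes "pointwise_seq_continuous S \<Psi>" "\<And>n. continuous_on S (U n)" "continuous_on S u"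
    and "\<And>x. x \<in> S \<Longrightarrow> (\<lambda>n. U n x) \<longlonglongrightarrow> u x"
  shows "(\<lambda>n. \<Psi> (U n)) \<longlonglongrightarrow> \<Psi> u"
  using assms unfolding pointwise_seq_continuous_def by blast

lemma euler_polygon_param_fixpoint:
  assumes "continuous_on UNIV (\<lambda>(K, s, x). H K s x)" "pointwise_seq_continuous {a..T} \<Psi>"
    and "\<And>u. continuous_on {a..T} u \<Longrightarrow> \<Psi> u \<in> {K1..K2}"
  obtains K where "K \<in> {K1..K2}" "\<Psi> (euler_polygon (H K) a \<delta> u0 N) = K"
proof -
  let ?P = "\<lambda>K. euler_polygon (H K) a \<delta> u0 N"
  have "continuous_on {K1..K2} (\<lambda>K. \<Psi> (?P K) - K)"
  proof (rule continuous_on_sequentiallyI)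
    fix Ks K assume "\<forall>m. Ks m \<in> {K1..K2}" "K \<in> {K1..K2}" "Ks \<longlonglongrightarrow> K"
    then have "(\<lambda>m. ?P (Ks m) x) \<longlonglongrightarrow> ?P K x" for x
      using continuous_on_tendsto_compose[OF continuous_on_euler_polygon_param[OF assms(1)]] by simp
    then have "(\<lambda>m. \<Psi> (?P (Ks m))) \<longlonglongrightarrow> \<Psi> (?P K)"
      by (intro pointwise_seq_continuousD[OF assms(2)] continuous_on_euler_polygon)
    then show "(\<lambda>m. \<Psi> (?P (Ks m)) - Ks m) \<longlonglongrightarrow> \<Psi> (?P K) - K"
      using \<open>Ks \<longlonglongrightarrow> K\<close> by (rule tendsto_diff)
  qed
  moreover have "\<Psi> (?P K2) - K2 \<le> 0" "0 \<le> \<Psi> (?P K1) - K1" "K1 \<le> K2"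
    using assms(3)[OF continuous_on_euler_polygon] by fastforce+
  ultimately obtain K where "K1 \<le> K" "K \<le> K2" "\<Psi> (?P K) - K = 0"
    using IVT2'[of "\<lambda>K. \<Psi> (?P K) - K" K2 0 K1] by blast
  then show ?thesis
    using that by simp
qed

lemma lipschitz_family_convergent_subseq:
  fixes F :: "nat \<Rightarrow> real \<Rightarrow> real"
  assumes "\<And>n x. x \<in> {a..T} \<Longrightarrow> \<bar>F n x\<bar> \<le> R" "0 \<le> B"
    and "\<And>n s t. a \<le> s \<Longrightarrow> s \<le> t \<Longrightarrow> t \<le> T \<Longrightarrow> \<bar>F n t - F n s\<bar> \<le> B * (t - s)"
  obtains r :: "nat \<Rightarrow> nat" and g where "strict_mono r" "continuous_on {a..T} g"
    "\<And>x. x \<in> {a..T} \<Longrightarrow> (\<lambda>n. F (r n) x) \<longlonglongrightarrow> g x"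
proof -
  have lip: "\<bar>F n x - F n y\<bar> \<le> B * \<bar>x - y\<bar>" if "x \<in> {a..T}" "y \<in> {a..T}" for n x y
    using assms(3)[of x y n] assms(3)[of y x n] that by (cases "x \<le> y") (auto simp: abs_minus_commute)
  obtain g and r :: "nat \<Rightarrow> nat" where g: "continuous_on {a..T} g" and r: "strict_mono r"
    and unif: "\<And>e. 0 < e \<Longrightarrow> \<exists>N. \<forall>n x. n \<ge> N \<and> x \<in> {a..T} \<longrightarrow> norm (F (r n) x - g x) < e"
  proof (rule Arzela_Ascoli[of "{a..T}" F R])
    fix x e assume x: "x \<in> {a..T}" and e: "0 < (e::real)"
    show "\<exists>d>0. \<forall>n y. y \<in> {a..T} \<and> norm (x - y) < d \<longrightarrow> norm (F n x - F n y) < e"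
    proof (intro exI[of _ "e / (B + 1)"] conjI allI impI)
      fix n y assume y: "y \<in> {a..T} \<and> norm (x - y) < e / (B + 1)"
      have "\<bar>F n x - F n y\<bar> \<le> B * \<bar>x - y\<bar>"
        using lip x y by blast
      also have "\<dots> \<le> B * (e / (B + 1))"
        using y assms(2) by (intro mult_left_mono) auto
      also have "\<dots> < e"
        using e assms(2) by (simp add: field_simps)
      finally show "norm (F n x - F n y) < e"
        by simp
    qed (use e assms(2) in simp)
  qed (use assms(1) in auto)
  have "(\<lambda>n. F (r n) x) \<longlonglongrightarrow> g x" if "x \<in> {a..T}" for x
  proof (rule LIMSEQ_I)
    fix e :: real assume "0 < e"
    then show "\<exists>N. \<forall>n\<ge>N. norm (F (r n) x - g x) < e"
      using unif[of e] that by blast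
  qed
  then show ?thesis
    using that g r by blast
qed

lemma lipschitz_family_param_convergent_subseq:
  fixes F :: "nat \<Rightarrow> real \<Rightarrow> real" and K :: "nat \<Rightarrow> real"
  assumes "\<And>n x. x \<in> {a..T} \<Longrightarrow> \<bar>F n x\<bar> \<le> R" "0 \<le> B"
    and "\<And>n s t. a \<le> s \<Longrightarrow> s \<le> t \<Longrightarrow> t \<le> T \<Longrightarrow> \<bar>F n t - F n s\<bar> \<le> B * (t - s)"
    and "\<And>n. K n \<in> {K1..K2}"
  obtains \<sigma> :: "nat \<Rightarrow> nat" and g K0 where "strict_mono \<sigma>" "continuous_on {a..T} g" "(\<lambda>m. K (\<sigma> m)) \<longlonglongrightarrow> K0"
    "\<And>x. x \<in> {a..T} \<Longrightarrow> (\<lambda>m. F (\<sigma> m) x) \<longlonglongrightarrow> g x"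
proof -
  obtain r :: "nat \<Rightarrow> nat" and g where r: "strict_mono r" and g: "continuous_on {a..T} g"
    and Fg: "\<And>x. x \<in> {a..T} \<Longrightarrow> (\<lambda>n. F (r n) x) \<longlonglongrightarrow> g x"
    using lipschitz_family_convergent_subseq[of a T F, OF assms(1-3)] by blast
  obtain K0 q where q: "strict_mono (q :: nat \<Rightarrow> nat)" and "(K \<circ> r \<circ> q) \<longlonglongrightarrow> K0"
    using seq_compactE[OF compact_imp_seq_compact[OF compact_Icc], of "K \<circ> r" K1 K2] assms(4)
    by (metis comp_apply)
  moreover have "(\<lambda>m. F (r (q m)) x) \<longlonglongrightarrow> g x" if "x \<in> {a..T}" for x
    using LIMSEQ_subseq_LIMSEQ[OF Fg[OF that] q] by (simp add: o_def)
  ultimately show ?thesis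
    using that[of "r \<circ> q"] strict_mono_o[OF r q] g by (simp add: o_def)
qed

lemma integral_tendsto_param:
  fixes H :: "real \<Rightarrow> real \<Rightarrow> real \<Rightarrow> real"
  assumes "continuous_on UNIV (\<lambda>(K, s, x). H K s x)" "\<And>K s x. \<bar>H K s x\<bar> \<le> B"
    and "K \<longlonglongrightarrow> K0" "\<And>n. continuous_on {a..t} (U n)" "\<And>s. s \<in> {a..t} \<Longrightarrow> (\<lambda>n. U n s) \<longlonglongrightarrow> u s"
  shows "(\<lambda>n. integral {a..t} (\<lambda>s. H (K n) s (U n s))) \<longlonglongrightarrow> integral {a..t} (\<lambda>s. H K0 s (u s))"
proof (rule dominated_convergence(2)[where h = "\<lambda>_. B"])
  show "(\<lambda>_. B) integrable_on {a..t}"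
    by (rule integrable_continuous_interval[OF continuous_on_const])
  show "(\<lambda>s. H (K n) s (U n s)) integrable_on {a..t}" for n
    by (intro integrable_continuous_interval continuous_on_compose_uncurry3[OF assms(1)]
        continuous_intros assms(4))
  fix s assume "s \<in> {a..t}"
  then have "(\<lambda>n. (K n, s, U n s)) \<longlonglongrightarrow> (K0, s, u s)"
    by (intro tendsto_Pair assms(3,5) tendsto_const)
  from continuous_on_tendsto_compose[OF assms(1) this]
  show "(\<lambda>n. H (K n) s (U n s)) \<longlonglongrightarrow> H K0 s (u s)"
    by simp
next
  show "norm (H (K n) s (U n s)) \<le> B" for n s
    using assms(2) by simp
qed

lemma integral_equation_limit:
  fixes H :: "real \<Rightarrow> real \<Rightarrow> real \<Rightarrow> real"
  assumes "continuous_on UNIV (\<lambda>(K, s, x). H K s x)" "\<And>K s x. \<bar>H K s x\<bar> \<le> B"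
    and "K \<longlonglongrightarrow> K0" "\<And>n. continuous_on {a..t} (U n)" "\<And>s. s \<in> {a..t} \<Longrightarrow> (\<lambda>n. U n s) \<longlonglongrightarrow> u s"
    and "(\<lambda>n. U n t - u0 - integral {a..t} (\<lambda>s. H (K n) s (U n s))) \<longlonglongrightarrow> 0" "a \<le> t"
  shows "u t = u0 + integral {a..t} (\<lambda>s. H K0 s (u s))"
proof -
  let ?I = "\<lambda>n. integral {a..t} (\<lambda>s. H (K n) s (U n s))"
  have "(\<lambda>n. (U n t - u0 - ?I n) + u0 + ?I n) \<longlonglongrightarrow> 0 + u0 + integral {a..t} (\<lambda>s. H K0 s (u s))"
    by (intro tendsto_add tendsto_const assms(6) integral_tendsto_param[OF assms(1-5)])
  then have "(\<lambda>n. U n t) \<longlonglongrightarrow> u0 + integral {a..t} (\<lambda>s. H K0 s (u s))"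
    by simp
  then show ?thesis
    using assms(5,7) LIMSEQ_unique by auto
qed

theorem nonlocal_integral_equation_solvable:
  fixes H :: "real \<Rightarrow> real \<Rightarrow> real \<Rightarrow> real" and \<Psi> :: "(real \<Rightarrow> real) \<Rightarrow> real"
  assumes "a < T" "continuous_on UNIV (\<lambda>(K, s, x). H K s x)" "\<And>K s x. \<bar>H K s x\<bar> \<le> B"
    and "pointwise_seq_continuous {a..T} \<Psi>" "\<And>u. continuous_on {a..T} u \<Longrightarrow> \<Psi> u \<in> {K1..K2}"
  obtains u where "continuous_on {a..T} u"
    "\<And>t. t \<in> {a..T} \<Longrightarrow> u t = u0 + integral {a..t} (\<lambda>s. H (\<Psi> u) s (u s))"
proof -
  define \<delta> where "\<delta> n = (T - a) / real (Suc n)" for n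
  have \<delta>: "\<delta> n > 0" "a + real (Suc n) * \<delta> n = T" "real (Suc n) * \<delta> n = T - a" for n
    using assms(1) by (simp_all add: \<delta>_def)
  have "\<forall>n. \<exists>K. K \<in> {K1..K2} \<and> \<Psi> (euler_polygon (H K) a (\<delta> n) u0 (Suc n)) = K"
    using euler_polygon_param_fixpoint[OF assms(2,4,5)] by blast
  then obtain Kn where Kn: "\<And>n. Kn n \<in> {K1..K2}"
    "\<And>n. \<Psi> (euler_polygon (H (Kn n)) a (\<delta> n) u0 (Suc n)) = Kn n"
    by metis
  define F where "F n = euler_polygon (H (Kn n)) a (\<delta> n) u0 (Suc n)" for n
  have F_cont: "continuous_on S (F n)" for n S
    unfolding F_def by (rule continuous_on_euler_polygon)
  have "\<bar>F n x\<bar> \<le> \<bar>u0\<bar> + B * (T - a)" if "x \<in> {a..T}" for n x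
    unfolding F_def \<delta>(3)[of n, symmetric] using that \<delta>(2)[of n]
    by (intro euler_polygon_bounded[OF \<delta>(1) zero_less_Suc assms(3)]) auto
  moreover have "0 \<le> B"
    using assms(3)[of 0 0 0] by simp
  moreover have "\<bar>F n t - F n s\<bar> \<le> B * (t - s)" if "a \<le> s" "s \<le> t" "t \<le> T" for n s t
    unfolding F_def using that \<delta>[of n] by (intro euler_polygon_lipschitz assms(3)) auto
  ultimately obtain \<sigma> :: "nat \<Rightarrow> nat" and g K where \<sigma>: "strict_mono \<sigma>" and g: "continuous_on {a..T} g"
    and K_lim: "(\<lambda>m. Kn (\<sigma> m)) \<longlonglongrightarrow> K" and F_lim: "\<And>x. x \<in> {a..T} \<Longrightarrow> (\<lambda>m. F (\<sigma> m) x) \<longlonglongrightarrow> g x"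
    using lipschitz_family_param_convergent_subseq[of a T F _ B Kn, OF _ _ _ Kn(1)] by blast
  have "(\<lambda>m. \<Psi> (F (\<sigma> m))) \<longlonglongrightarrow> \<Psi> g"
    by (intro pointwise_seq_continuousD[OF assms(4)] F_cont g F_lim)
  then have K: "K = \<Psi> g"
    using LIMSEQ_unique[OF K_lim] by (simp add: F_def Kn(2))
  have "g t = u0 + integral {a..t} (\<lambda>s. H K s (g s))" if t: "t \<in> {a..T}" for t
  proof (rule integral_equation_limit[OF assms(2,3) K_lim F_cont])
    show "(\<lambda>m. F (\<sigma> m) s) \<longlonglongrightarrow> g s" if "s \<in> {a..t}" for s
      using that t by (intro F_lim) auto
    show "(\<lambda>m. F (\<sigma> m) t - u0 - integral {a..t} (\<lambda>s. H (Kn (\<sigma> m)) s (F (\<sigma> m) s))) \<longlonglongrightarrow> 0"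
      using LIMSEQ_subseq_LIMSEQ[OF euler_polygon_integral_error_tendsto_zero[OF assms(1-3) Kn(1) t] \<sigma>]
      by (simp add: F_def \<delta>_def o_def)
  qed (use t in auto)
  then show ?thesis
    using that g K by blast
qed

section \<open>The nonlocal thermistor problem\<close>

lemma continuous_on_compose_uncurry:
  fixes f :: "real \<Rightarrow> real \<Rightarrow> real"
  assumes "continuous_on (A \<times> UNIV) (\<lambda>(t, x). f t x)"
    and "continuous_on S p" "continuous_on S q" "p ` S \<subseteq> A"
  shows "continuous_on S (\<lambda>y. f (p y) (q y))"
proof -
  have "continuous_on S (\<lambda>y. (p y, q y))" "(\<lambda>y. (p y, q y)) ` S \<subseteq> A \<times> UNIV"
    using assms(2-4) by (auto intro: continuous_on_Pair)
  from continuous_on_compose2[OF assms(1) this] show ?thesis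
    by simp
qed

lemma strip_extrema:
  fixes f :: "real \<Rightarrow> real \<Rightarrow> real"
  assumes "continuous_on ({a..T} \<times> UNIV) (\<lambda>(t, x). f t x)" "a \<le> T" "0 \<le> R"
  obtains m m' where "\<exists>t\<in>{a..T}. \<exists>x. \<bar>x\<bar> \<le> R \<and> f t x = m"
    "\<And>t x. t \<in> {a..T} \<Longrightarrow> \<bar>x\<bar> \<le> R \<Longrightarrow> m \<le> f t x \<and> f t x \<le> m'"
proof -
  let ?C = "{a..T} \<times> {-R..R}" and ?f = "\<lambda>(t, x). f t x"
  have C: "compact ?C" "?C \<noteq> {}" "continuous_on ?C ?f"
    using assms by (auto intro: compact_Times continuous_on_subset[OF assms(1)])
  obtain p where p: "p \<in> ?C" "\<And>z. z \<in> ?C \<Longrightarrow> ?f p \<le> ?f z"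
    using continuous_attains_inf[OF C] by blast
  obtain q where "\<And>z. z \<in> ?C \<Longrightarrow> ?f z \<le> ?f q"
    using continuous_attains_sup[OF C] by blast
  with p show ?thesis
    by (intro that[of "?f p" "?f q"]) (force simp: abs_le_iff)+
qed

lemma hat_eventually_zero:
  fixes x s :: real
  assumes "x \<noteq> s"
  shows "\<forall>\<^sub>F n in sequentially. max 0 (1 - real (Suc n) * \<bar>x - s\<bar>) = 0"
proof -
  obtain N :: nat where N: "1 / \<bar>x - s\<bar> < real N"
    using reals_Archimedean2 by blast
  have "1 \<le> real (Suc n) * \<bar>x - s\<bar>" if "N \<le> n" for n
  proof -
    have "1 < real N * \<bar>x - s\<bar>"
      using N assms by (simp add: divide_less_eq)
    also have "\<dots> \<le> real (Suc n) * \<bar>x - s\<bar>"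
      using that by (intro mult_right_mono) auto
    finally show ?thesis
      by simp
  qed
  then show ?thesis
    by (intro eventually_sequentiallyI[of N]) simp
qed

lemma strip_bounded:
  fixes f :: "real \<Rightarrow> real \<Rightarrow> real"
  assumes "continuous_on ({a..T} \<times> UNIV) (\<lambda>(t, x). f t x)"
  obtains C where "\<And>t x. t \<in> {a..T} \<Longrightarrow> \<bar>x\<bar> \<le> R \<Longrightarrow> \<bar>f t x\<bar> \<le> C"
proof (cases "a \<le> T \<and> 0 \<le> R")
  case True
  then obtain m m' where m: "\<And>t x. t \<in> {a..T} \<Longrightarrow> \<bar>x\<bar> \<le> R \<Longrightarrow> m \<le> f t x \<and> f t x \<le> m'"
    using strip_extrema[OF assms conjunct1[OF True] conjunct2[OF True]] by metis
  have "\<bar>f t x\<bar> \<le> \<bar>m\<bar> + \<bar>m'\<bar>" if "t \<in> {a..T}" "\<bar>x\<bar> \<le> R" for t x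
    using m[OF that] abs_ge_self[of m'] abs_ge_minus_self[of m] abs_ge_zero[of m] abs_ge_zero[of m']
    unfolding abs_le_iff by linarith
  then show ?thesis
    using that by blast
next
  case False
  then have "\<not> (t \<in> {a..T} \<and> \<bar>x\<bar> \<le> R)" for t x
    using abs_ge_zero[of x] by (auto simp del: abs_ge_zero)
  then show ?thesis
    using that[of 0] by blast
qed

lemma integral_limit_through_point:
  fixes f :: "real \<Rightarrow> real \<Rightarrow> real" and w :: "real \<Rightarrow> real"
  assumes "continuous_on ({a..T} \<times> UNIV) (\<lambda>(t, x). f t x)" "continuous_on {a..T} w" "s \<in> {a..T}"
  obtains Y where "\<And>n. continuous_on {a..T} (Y n)" "\<And>n. Y n s = z"
    "(\<lambda>n. integral {a..T} (\<lambda>x. f x (Y n x))) \<longlonglongrightarrow> integral {a..T} (\<lambda>x. f x (w x))"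
proof -
  define Y where "Y n x = w x + (z - w s) * max 0 (1 - real (Suc n) * \<bar>x - s\<bar>)" for n x
  have Y_cont: "continuous_on {a..T} (Y n)" for n
    unfolding Y_def by (intro continuous_intros assms(2))
  obtain Rw where Rw: "\<And>x. x \<in> {a..T} \<Longrightarrow> \<bar>w x\<bar> \<le> Rw"
    using compact_imp_bounded[OF compact_continuous_image[OF assms(2) compact_Icc]]
    by (auto simp: bounded_iff simp del: atLeastAtMost_iff)
  define R where "R = Rw + \<bar>z - w s\<bar>"
  have Y_bound: "\<bar>Y n x\<bar> \<le> R" if "x \<in> {a..T}" for n x
  proof -
    have "\<bar>(z - w s) * max 0 (1 - real (Suc n) * \<bar>x - s\<bar>)\<bar> \<le> \<bar>z - w s\<bar> * 1"
      unfolding abs_mult by (intro mult_left_mono) auto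
    then show ?thesis
      using Rw[OF that] by (simp add: Y_def R_def)
  qed
  obtain C where C: "\<And>t x. t \<in> {a..T} \<Longrightarrow> \<bar>x\<bar> \<le> R \<Longrightarrow> \<bar>f t x\<bar> \<le> C"
    using strip_bounded[OF assms(1)] by blast
  define g where "g x = (if x = s then f s z else f x (w x))" for x
  have "(\<lambda>n. integral {a..T} (\<lambda>x. f x (Y n x))) \<longlonglongrightarrow> integral {a..T} g"
  proof (rule dominated_convergence(2)[where h = "\<lambda>_. C"])
    show "(\<lambda>x. f x (Y n x)) integrable_on {a..T}" for n
      by (intro integrable_continuous_interval
          continuous_on_compose_uncurry[OF assms(1) continuous_on_id Y_cont]) auto
    show "norm (f x (Y n x)) \<le> C" if "x \<in> {a..T}" for n x
      using C[OF that Y_bound[OF that]] by simp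
    show "(\<lambda>n. f x (Y n x)) \<longlonglongrightarrow> g x" for x
    proof (cases "x = s")
      case False
      have "\<forall>\<^sub>F n in sequentially. f x (Y n x) = g x"
        using hat_eventually_zero[OF False] by (rule eventually_mono) (simp add: Y_def g_def False)
      then show ?thesis
        by (rule tendsto_eventually)
    qed (simp add: Y_def g_def)
  qed auto
  also have "integral {a..T} g = integral {a..T} (\<lambda>x. f x (w x))"
    by (rule integral_spike[of "{s}"]) (auto simp: g_def)
  finally show ?thesis
    using that[OF Y_cont] by (simp add: Y_def[of _ s])
qed

lemma zero_set_boundary_point:
  fixes M :: "real \<Rightarrow> real"
  assumes "continuous_on {a..T} M" "t0 \<in> {a..T}" "M t0 = 0" "t1 \<in> {a..T}" "M t1 \<noteq> 0"
  obtains s0 where "s0 \<in> {a..T}" "M s0 = 0" "s0 \<in> closure {s \<in> {a..T}. M s \<noteq> 0}"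
proof -
  define Z where "Z = {s \<in> {a..T}. M s = 0}"
  have "closedin (top_of_set {a..T}) Z"
    unfolding Z_def by (rule continuous_closedin_preimage_constant[OF assms(1)])
  moreover have "t0 \<in> Z" "t1 \<notin> Z"
    using assms(2-5) by (simp_all add: Z_def)
  ultimately have "\<not> openin (top_of_set {a..T}) Z"
    using connected_clopen[of "{a..T}"] connected_Icc assms(4) by blast
  moreover have "Z \<subseteq> {a..T}"
    by (auto simp: Z_def)
  ultimately obtain s0 where "s0 \<in> Z" and s0: "\<And>e. e > 0 \<Longrightarrow> \<exists>s\<in>{a..T}. dist s s0 < e \<and> s \<notin> Z"
    unfolding openin_euclidean_subtopology_iff by blast
  have "s0 \<in> closure {s \<in> {a..T}. M s \<noteq> 0}"
    unfolding closure_approachable using s0 by (fastforce simp: Z_def)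
  moreover have "s0 \<in> {a..T}" "M s0 = 0"
    using \<open>s0 \<in> Z\<close> by (simp_all add: Z_def)
  ultimately show ?thesis
    using that by blast
qed

definition clamp :: "real \<Rightarrow> real \<Rightarrow> real \<Rightarrow> real" where
  "clamp lo hi x = max lo (min hi x)"

lemma clamp_in: "lo \<le> hi \<Longrightarrow> clamp lo hi x \<in> {lo..hi}"
  by (auto simp: clamp_def)

lemma clamp_id: "x \<in> {lo..hi} \<Longrightarrow> clamp lo hi x = x"
  by (auto simp: clamp_def)

lemma continuous_on_clamp [continuous_intros]:
  "continuous_on S lo \<Longrightarrow> continuous_on S hi \<Longrightarrow> continuous_on S x \<Longrightarrow>
    continuous_on S (\<lambda>y. clamp (lo y) (hi y) (x y))"
  unfolding clamp_def by (intro continuous_intros)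

locale thermistor_tube =
  fixes \<alpha> a T lam ua :: real and f :: "real \<Rightarrow> real \<Rightarrow> real" and v M :: "real \<Rightarrow> real"
  assumes alpha_le_1: "\<alpha> \<le> 1" and interval: "0 < a" "a < T" and lam_pos: "0 < lam"
    and f_cont: "continuous_on ({a..T} \<times> UNIV) (\<lambda>(t, x). f t x)"
    and f_pos: "\<forall>t\<in>{a..T}. \<forall>x. 0 < f t x"
    and tube: "tube_solution \<alpha> a T (thermistor_rhs lam f a T) ua v M"
begin

abbreviation "G \<equiv> thermistor_rhs lam f a T"
abbreviation "Dv \<equiv> conf_deriv \<alpha> {a..T} v"
abbreviation "DM \<equiv> conf_deriv \<alpha> {a..T} M"

lemma conf_C_v: "conf_C \<alpha> a T UNIV v" and conf_C_M: "conf_C \<alpha> a T {0..} M"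
  and tube_ineq: "\<And>t y. t \<in> {a..T} \<Longrightarrow> continuous_on {a..T} y \<Longrightarrow> \<bar>y t - v t\<bar> = M t \<Longrightarrow>
    (y t - v t) * (G y t - Dv t) \<le> M t * DM t"
  and tube_degenerate: "\<And>t. t \<in> {a..T} \<Longrightarrow> M t = 0 \<Longrightarrow> Dv t = G v t \<and> DM t = 0"
  and tube_start: "\<bar>ua - v a\<bar> \<le> M a"
  using tube unfolding tube_solution_def by blast+

lemma continuous_v: "continuous_on {a..T} v" and continuous_M: "continuous_on {a..T} M"
  using conf_C_continuous_on[OF interval] conf_C_v conf_C_M by blast+

lemma continuous_Dv: "continuous_on {a..T} Dv" and continuous_DM: "continuous_on {a..T} DM"
  using conf_C_v conf_C_M by (simp_all add: conf_C_def)

lemma M_nonneg: "t \<in> {a..T} \<Longrightarrow> 0 \<le> M t"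
  using conf_C_M by (auto simp: conf_C_def)

lemma integral_f_pos:
  assumes "continuous_on {a..T} w"
  shows "0 < integral {a..T} (\<lambda>x. f x (w x))"
  using integral_less_real[of a T "\<lambda>_. 0" "\<lambda>x. f x (w x)"] interval(2) f_pos
  by (simp add: continuous_on_compose_uncurry[OF f_cont continuous_on_id assms])

text \<open>Condition (i) of a tube solution is imposed for every continuous \<open>y\<close> through a boundary
  point of the tube, and such \<open>y\<close> can be chosen with nonlocal term arbitrarily close to that
  of any given continuous \<open>w\<close>.\<close>
lemma tube_boundary_bound:
  assumes "s \<in> {a..T}" "0 < M s" "\<epsilon> \<in> {-1, 1}" "continuous_on {a..T} w"
  shows "\<epsilon> * (lam * f s (v s + \<epsilon> * M s) / (integral {a..T} (\<lambda>x. f x (w x)))\<^sup>2 - Dv s) \<le> DM s"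
proof -
  let ?z = "v s + \<epsilon> * M s" and ?J = "integral {a..T} (\<lambda>x. f x (w x))"
  obtain Y where Y: "\<And>n. continuous_on {a..T} (Y n)" "\<And>n. Y n s = ?z"
    and Y_lim: "(\<lambda>n. integral {a..T} (\<lambda>x. f x (Y n x))) \<longlonglongrightarrow> ?J"
    using integral_limit_through_point[OF f_cont assms(4,1), where z = ?z] by blast
  have "\<epsilon> * (lam * f s ?z / (integral {a..T} (\<lambda>x. f x (Y n x)))\<^sup>2 - Dv s) \<le> DM s" for n
  proof -
    have "\<bar>Y n s - v s\<bar> = M s"
      using Y(2) assms(2,3) by auto
    then have "M s * (\<epsilon> * (G (Y n) s - Dv s)) \<le> M s * DM s"
      using tube_ineq[OF assms(1) Y(1)] Y(2) by (simp add: algebra_simps)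
    then show ?thesis
      using assms(2) Y(2) by (simp add: thermistor_rhs_def)
  qed
  moreover have "(\<lambda>n. \<epsilon> * (lam * f s ?z / (integral {a..T} (\<lambda>x. f x (Y n x)))\<^sup>2 - Dv s))
      \<longlonglongrightarrow> \<epsilon> * (lam * f s ?z / ?J\<^sup>2 - Dv s)"
    using integral_f_pos[OF assms(4)] by (intro tendsto_intros Y_lim) auto
  ultimately show ?thesis
    by (intro LIMSEQ_le_const2) auto
qed

lemma integral_eq_at_boundary_zero:
  assumes "s0 \<in> {a..T}" "M s0 = 0" "s0 \<in> closure {s \<in> {a..T}. M s \<noteq> 0}"
    and "continuous_on {a..T} w"
  shows "integral {a..T} (\<lambda>x. f x (w x)) = integral {a..T} (\<lambda>x. f x (v x))"
proof -
  let ?J = "integral {a..T} (\<lambda>x. f x (w x))" and ?I = "integral {a..T} (\<lambda>x. f x (v x))"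
  obtain sn where sn: "\<And>n. sn n \<in> {a..T}" "\<And>n. M (sn n) \<noteq> 0" and sn_lim: "sn \<longlonglongrightarrow> s0"
    using assms(3) unfolding closure_sequential by blast
  have "\<epsilon> * (lam * f s0 (v s0) / ?J\<^sup>2 - Dv s0) \<le> 0" if "\<epsilon> \<in> {-1, 1}" for \<epsilon>
  proof -
    let ?h = "\<lambda>s. \<epsilon> * (lam * f s (v s + \<epsilon> * M s) / ?J\<^sup>2 - Dv s) - DM s"
    have "continuous_on {a..T} ?h"
      using integral_f_pos[OF assms(4)]
      by (intro continuous_intros continuous_on_compose_uncurry[OF f_cont continuous_on_id]
          continuous_v continuous_M continuous_Dv continuous_DM) auto
    then have "(\<lambda>n. ?h (sn n)) \<longlonglongrightarrow> ?h s0"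
      using sn(1) assms(1) by (intro continuous_on_tendsto_compose[OF _ sn_lim]) auto
    moreover have "?h (sn n) \<le> 0" for n
    proof -
      have "0 < M (sn n)"
        using sn(2)[of n] M_nonneg[OF sn(1)] by (simp add: order_less_le)
      from tube_boundary_bound[OF sn(1) this that assms(4)] show ?thesis
        by simp
    qed
    ultimately have "?h s0 \<le> 0"
      by (intro LIMSEQ_le_const2) auto
    then show ?thesis
      using tube_degenerate[OF assms(1,2)] assms(2) by simp
  qed
  from this[of 1] this[of "-1"] have "lam * f s0 (v s0) / ?J\<^sup>2 = Dv s0"
    by simp
  also have "\<dots> = lam * f s0 (v s0) / ?I\<^sup>2"
    using tube_degenerate[OF assms(1,2)] by (simp add: thermistor_rhs_def)
  finally have "lam * f s0 (v s0) / ?J\<^sup>2 = lam * f s0 (v s0) / ?I\<^sup>2" .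
  moreover have "0 < f s0 (v s0)"
    using f_pos assms(1) by blast
  ultimately show ?thesis
    using lam_pos integral_f_pos[OF assms(4)] integral_f_pos[OF continuous_v]
    by (simp add: power2_eq_iff_nonneg)
qed

lemma nonlocal_term_eq_in_tube:
  assumes "t \<in> {a..T}" "M t = 0" "continuous_on {a..T} w" "\<And>x. x \<in> {a..T} \<Longrightarrow> \<bar>w x - v x\<bar> \<le> M x"
  shows "G w t = Dv t"
proof -
  have "integral {a..T} (\<lambda>x. f x (w x)) = integral {a..T} (\<lambda>x. f x (v x))"
  proof (cases "\<forall>x\<in>{a..T}. M x = 0")
    case True
    then show ?thesis
      using assms(4) by (intro integral_cong) force
  next
    case False
    then obtain t1 where "t1 \<in> {a..T}" "M t1 \<noteq> 0"
      by blast
    then obtain s0 where "s0 \<in> {a..T}" "M s0 = 0" "s0 \<in> closure {s \<in> {a..T}. M s \<noteq> 0}"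
      using zero_set_boundary_point[OF continuous_M assms(1,2)] by blast
    then show ?thesis
      by (rule integral_eq_at_boundary_zero[OF _ _ _ assms(3)])
  qed
  moreover have "w t = v t"
    using assms(4)[OF assms(1)] assms(2) by simp
  ultimately show ?thesis
    using tube_degenerate[OF assms(1,2)] by (simp add: thermistor_rhs_def)
qed

lemma clamp_time: "clamp a T s \<in> {a..T}"
  using interval by (intro clamp_in) simp

text \<open>Outside \<open>[a, T]\<close> the time argument is clamped to the interval, so that the truncated
  right-hand side below is defined and continuous everywhere, as the Peano theorem requires.\<close>
definition tube_proj :: "real \<Rightarrow> real \<Rightarrow> real" where
  "tube_proj s x = clamp (v (clamp a T s) - M (clamp a T s)) (v (clamp a T s) + M (clamp a T s)) x"

lemma tube_proj_on_interval:
  "t \<in> {a..T} \<Longrightarrow> tube_proj t x = clamp (v t - M t) (v t + M t) x"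
  by (simp add: tube_proj_def clamp_id)

lemma tube_proj_in_tube: "t \<in> {a..T} \<Longrightarrow> \<bar>tube_proj t x - v t\<bar> \<le> M t"
  using M_nonneg[of t] by (auto simp: tube_proj_on_interval clamp_def)

lemma tube_proj_id: "t \<in> {a..T} \<Longrightarrow> \<bar>x - v t\<bar> \<le> M t \<Longrightarrow> tube_proj t x = x"
  by (auto simp: tube_proj_on_interval clamp_def)

lemma tube_proj_outside:
  assumes "t \<in> {a..T}" "\<sigma> \<in> {-1, 1}" "M t < \<sigma> * (x - v t)"
  shows "tube_proj t x = v t + \<sigma> * M t"
  using assms M_nonneg[OF assms(1)] by (auto simp: tube_proj_on_interval clamp_def)

lemma continuous_on_tube_proj:
  assumes "continuous_on S p" "continuous_on S q"
  shows "continuous_on S (\<lambda>y. tube_proj (p y) (q y))"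
proof -
  have "continuous_on S (\<lambda>y. clamp a T (p y))"
    by (intro continuous_intros assms(1))
  then have "continuous_on S (\<lambda>y. v (clamp a T (p y)))" "continuous_on S (\<lambda>y. M (clamp a T (p y)))"
    using clamp_time
    by (auto intro: continuous_on_compose2[OF continuous_v] continuous_on_compose2[OF continuous_M])
  then show ?thesis
    unfolding tube_proj_def by (intro continuous_intros assms(2))
qed

lemma tube_proj_bounded:
  obtains R where "\<And>s x. \<bar>tube_proj s x\<bar> \<le> R"
proof -
  have "continuous_on {a..T} (\<lambda>t. \<bar>v t\<bar> + M t)"
    by (intro continuous_intros continuous_v continuous_M)
  moreover have "{a..T} \<noteq> {}"
    using interval by simp
  ultimately obtain t0 where t0: "\<forall>t\<in>{a..T}. \<bar>v t\<bar> + M t \<le> \<bar>v t0\<bar> + M t0"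
    using continuous_attains_sup[OF compact_Icc] by blast
  have "\<bar>tube_proj s x\<bar> \<le> \<bar>v t0\<bar> + M t0" for s x
  proof -
    let ?t = "clamp a T s"
    have "tube_proj s x = tube_proj ?t x"
      by (simp add: tube_proj_def clamp_id[OF clamp_time])
    then have "\<bar>tube_proj s x - v ?t\<bar> \<le> M ?t"
      using tube_proj_in_tube[OF clamp_time] by simp
    moreover have "\<bar>tube_proj s x\<bar> \<le> \<bar>tube_proj s x - v ?t\<bar> + \<bar>v ?t\<bar>"
      using abs_triangle_ineq[of "tube_proj s x - v ?t" "v ?t"] by simp
    moreover have "\<bar>v ?t\<bar> + M ?t \<le> \<bar>v t0\<bar> + M t0"
      using t0 clamp_time by blast
    ultimately show ?thesis
      by linarith
  qed
  then show ?thesis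
    using that by blast
qed

lemma f_tube_proj_bounds:
  obtains m m' where "0 < m" "\<And>t s x. t \<in> {a..T} \<Longrightarrow> m \<le> f t (tube_proj s x) \<and> f t (tube_proj s x) \<le> m'"
proof -
  obtain R where R: "\<And>s x. \<bar>tube_proj s x\<bar> \<le> R"
    using tube_proj_bounded by blast
  then have "0 \<le> R"
    using abs_ge_zero order_trans by blast
  then obtain m m' where m: "\<exists>t\<in>{a..T}. \<exists>x. \<bar>x\<bar> \<le> R \<and> f t x = m"
    and mm: "\<And>t x. t \<in> {a..T} \<Longrightarrow> \<bar>x\<bar> \<le> R \<Longrightarrow> m \<le> f t x \<and> f t x \<le> m'"
    using strip_extrema[OF f_cont less_imp_le[OF interval(2)]] by blast
  have "0 < m"
    using m f_pos by auto
  then show ?thesis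
    using that mm R by blast
qed

definition nonlocal_coeff :: "(real \<Rightarrow> real) \<Rightarrow> real" where
  "nonlocal_coeff u = lam / (integral {a..T} (\<lambda>x. f x (tube_proj x (u x))))\<^sup>2"

lemma continuous_on_f_tube_proj:
  "continuous_on {a..T} u \<Longrightarrow> continuous_on {a..T} (\<lambda>x. f x (tube_proj x (u x)))"
  by (intro continuous_on_compose_uncurry[OF f_cont] continuous_on_id continuous_on_tube_proj) auto

lemma nonlocal_coeff_bounds:
  assumes "0 < m" "\<And>t s x. t \<in> {a..T} \<Longrightarrow> m \<le> f t (tube_proj s x) \<and> f t (tube_proj s x) \<le> m'"
    and "continuous_on {a..T} u"
  shows "nonlocal_coeff u \<in> {lam / (m' * (T - a))\<^sup>2..lam / (m * (T - a))\<^sup>2}"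
proof -
  let ?I = "integral {a..T} (\<lambda>x. f x (tube_proj x (u x)))"
  have int: "(\<lambda>x. f x (tube_proj x (u x))) integrable_on {a..T}"
    by (intro integrable_continuous_interval continuous_on_f_tube_proj assms(3))
  have const: "(\<lambda>_. c) integrable_on {a..T}" for c :: real
    by (rule integrable_continuous_interval[OF continuous_on_const])
  have "integral {a..T} (\<lambda>_. m) \<le> ?I"
    using assms(2) by (intro integral_le[OF const int]) simp
  moreover have "?I \<le> integral {a..T} (\<lambda>_. m')"
    using assms(2) by (intro integral_le[OF int const]) simp
  ultimately have I: "m * (T - a) \<le> ?I" "?I \<le> m' * (T - a)"
    using interval(2) by (simp_all add: mult.commute)
  moreover have "0 < m * (T - a)"
    using assms(1) interval(2) by simp
  ultimately have sq: "(m * (T - a))\<^sup>2 \<le> ?I\<^sup>2" "?I\<^sup>2 \<le> (m' * (T - a))\<^sup>2"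
    "0 < (m * (T - a))\<^sup>2" "0 < ?I\<^sup>2" "0 < (m' * (T - a))\<^sup>2"
    by (auto intro!: power_mono)
  have "lam / (m' * (T - a))\<^sup>2 \<le> lam / ?I\<^sup>2"
    using sq lam_pos by (intro divide_left_mono mult_pos_pos) auto
  moreover have "lam / ?I\<^sup>2 \<le> lam / (m * (T - a))\<^sup>2"
    using sq lam_pos by (intro divide_left_mono mult_pos_pos) auto
  ultimately show ?thesis
    by (simp add: nonlocal_coeff_def)
qed

lemma pointwise_seq_continuous_nonlocal_coeff: "pointwise_seq_continuous {a..T} nonlocal_coeff"
proof (rule pointwise_seq_continuousI)
  fix U :: "nat \<Rightarrow> real \<Rightarrow> real" and u
  assume U: "\<And>n. continuous_on {a..T} (U n)" and u: "continuous_on {a..T} u"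
    and lim: "\<And>x. x \<in> {a..T} \<Longrightarrow> (\<lambda>n. U n x) \<longlonglongrightarrow> u x"
  obtain m m' where m: "0 < m" "\<And>t s x. t \<in> {a..T} \<Longrightarrow> m \<le> f t (tube_proj s x) \<and> f t (tube_proj s x) \<le> m'"
    by (metis f_tube_proj_bounds)
  have "(\<lambda>n. integral {a..T} (\<lambda>x. f x (tube_proj x (U n x))))
      \<longlonglongrightarrow> integral {a..T} (\<lambda>x. f x (tube_proj x (u x)))"
  proof (rule dominated_convergence(2)[where h = "\<lambda>_. m'"])
    show "(\<lambda>_. m') integrable_on {a..T}"
      by (rule integrable_continuous_interval[OF continuous_on_const])
    show "(\<lambda>x. f x (tube_proj x (U n x))) integrable_on {a..T}" for n
      using U by (intro integrable_continuous_interval continuous_on_f_tube_proj) auto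
    show "norm (f x (tube_proj x (U n x))) \<le> m'" if "x \<in> {a..T}" for n x
      using m(2)[OF that, of x "U n x"] m(1) by simp
    fix x assume x: "x \<in> {a..T}"
    have "continuous_on UNIV (tube_proj x)"
      using continuous_on_tube_proj[OF continuous_on_const continuous_on_id] by simp
    from continuous_on_tendsto_compose[OF this lim[OF x]]
    have "(\<lambda>n. (x, tube_proj x (U n x))) \<longlonglongrightarrow> (x, tube_proj x (u x))"
      by (intro tendsto_Pair tendsto_const) simp
    from continuous_on_tendsto_compose[OF f_cont this]
    show "(\<lambda>n. f x (tube_proj x (U n x))) \<longlonglongrightarrow> f x (tube_proj x (u x))"
      using x by simp
  qed
  moreover have "integral {a..T} (\<lambda>x. f x (tube_proj x (u x))) \<noteq> 0"
    using integral_f_pos[OF continuous_on_tube_proj[OF continuous_on_id u]] by simp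
  ultimately show "(\<lambda>n. nonlocal_coeff (U n)) \<longlonglongrightarrow> nonlocal_coeff u"
    unfolding nonlocal_coeff_def by (intro tendsto_divide tendsto_const tendsto_power) simp_all
qed

definition truncated_rhs :: "real \<Rightarrow> real \<Rightarrow> real \<Rightarrow> real \<Rightarrow> real \<Rightarrow> real" where
  "truncated_rhs K1 K2 K s x = clamp K1 K2 K * f (clamp a T s) (tube_proj s x) / clamp a T s powr (1 - \<alpha>)"

lemma continuous_truncated_rhs: "continuous_on UNIV (\<lambda>(K, s, x). truncated_rhs K1 K2 K s x)"
proof -
  have "0 < clamp a T s" for s
    using clamp_time[of s] interval(1) by simp
  then show ?thesis
    unfolding truncated_rhs_def split_def using clamp_time
    by (intro continuous_intros continuous_on_compose_uncurry[OF f_cont] continuous_on_tube_proj)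
      (auto simp: less_imp_neq[symmetric])
qed

lemma truncated_rhs_bound:
  assumes "0 \<le> K1" "K1 \<le> K2" "\<And>t s x. t \<in> {a..T} \<Longrightarrow> f t (tube_proj s x) \<le> m'"
  shows "\<bar>truncated_rhs K1 K2 K s x\<bar> \<le> K2 * m' / a powr (1 - \<alpha>)"
proof -
  let ?c = "clamp K1 K2 K" and ?f = "f (clamp a T s) (tube_proj s x)"
  have c: "0 \<le> ?c" "?c \<le> K2"
    using clamp_in[OF assms(2), of K] assms(1) by auto
  have f: "0 < ?f" "?f \<le> m'"
    using assms(3) f_pos clamp_time by auto
  have "?c * ?f \<le> K2 * m'"
    using c f by (intro mult_mono) auto
  moreover have "a powr (1 - \<alpha>) \<le> clamp a T s powr (1 - \<alpha>)"
    using clamp_time[of s] interval(1) alpha_le_1 by (intro powr_mono2) auto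
  ultimately have "truncated_rhs K1 K2 K s x \<le> K2 * m' / a powr (1 - \<alpha>)"
    unfolding truncated_rhs_def using c f interval(1) by (intro frac_le) auto
  moreover have "0 \<le> truncated_rhs K1 K2 K s x"
    unfolding truncated_rhs_def using c f by simp
  ultimately show ?thesis
    by simp
qed

lemma truncated_rhs_eq:
  "s \<in> {a..T} \<Longrightarrow> K \<in> {K1..K2} \<Longrightarrow> truncated_rhs K1 K2 K s x = K * f s (tube_proj s x) / s powr (1 - \<alpha>)"
  by (simp add: truncated_rhs_def clamp_id)

lemma truncated_problem_solvable:
  obtains u where "continuous_on {a..T} u"
    "\<And>t. t \<in> {a..T} \<Longrightarrow> u t = ua + integral {a..t} (\<lambda>s. G (\<lambda>x. tube_proj x (u x)) s / s powr (1 - \<alpha>))"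
proof -
  obtain m m' where m: "0 < m" "\<And>t s x. t \<in> {a..T} \<Longrightarrow> m \<le> f t (tube_proj s x) \<and> f t (tube_proj s x) \<le> m'"
    by (metis f_tube_proj_bounds)
  define K1 where "K1 = lam / (m' * (T - a))\<^sup>2"
  define K2 where "K2 = lam / (m * (T - a))\<^sup>2"
  have coeff: "nonlocal_coeff u \<in> {K1..K2}" if "continuous_on {a..T} u" for u
    unfolding K1_def K2_def by (rule nonlocal_coeff_bounds[OF m that])
  then have "K1 \<le> K2"
    using continuous_on_const by fastforce
  moreover have "0 \<le> K1"
    using lam_pos by (simp add: K1_def)
  ultimately have bound: "\<bar>truncated_rhs K1 K2 K s x\<bar> \<le> K2 * m' / a powr (1 - \<alpha>)" for K s x
    using m(2) by (intro truncated_rhs_bound) auto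
  obtain u where u: "continuous_on {a..T} u"
    and u_eq: "\<And>t. t \<in> {a..T} \<Longrightarrow>
      u t = ua + integral {a..t} (\<lambda>s. truncated_rhs K1 K2 (nonlocal_coeff u) s (u s))"
    using nonlocal_integral_equation_solvable[OF interval(2) continuous_truncated_rhs bound
        pointwise_seq_continuous_nonlocal_coeff coeff] by blast
  have "truncated_rhs K1 K2 (nonlocal_coeff u) s (u s) = G (\<lambda>x. tube_proj x (u x)) s / s powr (1 - \<alpha>)"
    if "s \<in> {a..T}" for s
    using that coeff[OF u] by (simp add: truncated_rhs_eq thermistor_rhs_def nonlocal_coeff_def)
  then have "integral {a..t} (\<lambda>s. truncated_rhs K1 K2 (nonlocal_coeff u) s (u s)) =
      integral {a..t} (\<lambda>s. G (\<lambda>x. tube_proj x (u x)) s / s powr (1 - \<alpha>))" if "t \<in> {a..T}" for t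
    using that by (intro integral_cong) auto
  then show ?thesis
    using that u u_eq by simp
qed

lemma continuous_on_thermistor_rhs:
  assumes "continuous_on {a..T} w"
  shows "continuous_on {a..T} (G w)"
  unfolding thermistor_rhs_def using integral_f_pos[OF assms]
  by (intro continuous_intros continuous_on_compose_uncurry[OF f_cont continuous_on_id assms]) auto

lemma outward_drift_bound:
  assumes "s \<in> {a..T}" "\<sigma> \<in> {-1, 1}" "continuous_on {a..T} u" "M s < \<sigma> * (u s - v s)"
  shows "\<sigma> * (G (\<lambda>x. tube_proj x (u x)) s - Dv s) \<le> DM s"
proof -
  let ?w = "\<lambda>x. tube_proj x (u x)"
  have w: "continuous_on {a..T} ?w" "\<And>x. x \<in> {a..T} \<Longrightarrow> \<bar>?w x - v x\<bar> \<le> M x"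
    using continuous_on_tube_proj[OF continuous_on_id assms(3)] tube_proj_in_tube by auto
  show ?thesis
  proof (cases "M s = 0")
    case True
    then show ?thesis
      using nonlocal_term_eq_in_tube[OF assms(1) True w] tube_degenerate[OF assms(1) True] by simp
  next
    case False
    then have "0 < M s"
      using M_nonneg[OF assms(1)] by simp
    have "?w s - v s = \<sigma> * M s"
      using tube_proj_outside[OF assms(1,2,4)] by simp
    moreover have "\<bar>\<sigma> * M s\<bar> = M s"
      using assms(2) \<open>0 < M s\<close> by auto
    ultimately have "M s * (\<sigma> * (G ?w s - Dv s)) \<le> M s * DM s"
      using tube_ineq[OF assms(1) w(1)] by (simp add: algebra_simps)
    then show ?thesis
      using \<open>0 < M s\<close> by simp
  qed
qed

lemma truncated_solution_in_tube:
  assumes "continuous_on {a..T} u"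
    and "\<And>t. t \<in> {a..T} \<Longrightarrow> u t = ua + integral {a..t} (\<lambda>s. G (\<lambda>x. tube_proj x (u x)) s / s powr (1 - \<alpha>))"
    and "t \<in> {a..T}"
  shows "\<bar>u t - v t\<bar> \<le> M t"
proof -
  let ?w = "\<lambda>x. tube_proj x (u x)"
  have "continuous_on {a..T} (\<lambda>s. G ?w s / s powr (1 - \<alpha>))"
    using interval(1)
    by (intro continuous_intros continuous_on_thermistor_rhs continuous_on_tube_proj assms(1)) auto
  then have u_deriv: "(u has_real_derivative G ?w s / s powr (1 - \<alpha>)) (at s within {a..T})"
    if "s \<in> {a..T}" for s
    by (rule integral_equation_has_real_derivative[OF _ assms(2) that])
  have "\<sigma> * (u t - v t) - M t \<le> 0" if "\<sigma> \<in> {-1, 1}" for \<sigma>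
  proof (rule DERIV_nonpos_where_pos_imp_nonpos[of a t])
    show "a \<le> t" "\<sigma> * (u a - v a) - M a \<le> 0"
      using assms(2)[of a] assms(3) tube_start that by (auto simp: abs_le_iff)
    show "continuous_on {a..t} (\<lambda>t. \<sigma> * (u t - v t) - M t)"
      using assms(3) by (intro continuous_intros continuous_on_subset[OF assms(1)]
          continuous_on_subset[OF continuous_v] continuous_on_subset[OF continuous_M]) auto
    fix s assume s: "a < s" "s < t" "0 < \<sigma> * (u s - v s) - M s"
    then have sT: "s \<in> {a..T}" and "at s within {a..T} = at s"
      using assms(3) by (auto intro: at_within_Icc_at)
    then have "((\<lambda>t. \<sigma> * (u t - v t) - M t) has_real_derivative
        (\<sigma> * (G ?w s - Dv s) - DM s) / s powr (1 - \<alpha>)) (at s)"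
      using u_deriv[OF sT] conf_C_has_real_derivative[OF interval conf_C_v sT]
        conf_C_has_real_derivative[OF interval conf_C_M sT]
      by (auto intro!: derivative_eq_intros simp: diff_divide_distrib right_diff_distrib mult.commute)
    moreover have "(\<sigma> * (G ?w s - Dv s) - DM s) / s powr (1 - \<alpha>) \<le> 0"
      using outward_drift_bound[OF sT that assms(1)] s by (intro divide_nonpos_nonneg) auto
    ultimately show "\<exists>D. ((\<lambda>t. \<sigma> * (u t - v t) - M t) has_real_derivative D) (at s) \<and> D \<le> 0"
      by blast
  qed
  from this[of 1] this[of "-1"] show ?thesis
    by (simp add: abs_le_iff)
qed

lemma solution_in_tube_exists:
  "\<exists>u. conf_C \<alpha> a T UNIV u \<and> (\<forall>t\<in>{a..T}. conf_deriv \<alpha> {a..T} u t = G u t) \<and>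
     u a = ua \<and> (\<forall>t\<in>{a..T}. \<bar>u t - v t\<bar> \<le> M t)"
proof -
  obtain u where u: "continuous_on {a..T} u"
    and u_eq: "\<And>t. t \<in> {a..T} \<Longrightarrow>
      u t = ua + integral {a..t} (\<lambda>s. G (\<lambda>x. tube_proj x (u x)) s / s powr (1 - \<alpha>))"
    using truncated_problem_solvable by blast
  have in_tube: "\<bar>u t - v t\<bar> \<le> M t" if "t \<in> {a..T}" for t
    using truncated_solution_in_tube[OF u u_eq that] .
  then have proj_u: "tube_proj x (u x) = u x" if "x \<in> {a..T}" for x
    using that by (simp add: tube_proj_id)
  then have "integral {a..T} (\<lambda>x. f x (tube_proj x (u x))) = integral {a..T} (\<lambda>x. f x (u x))"
    by (intro integral_cong) simp
  then have "G (\<lambda>x. tube_proj x (u x)) s = G u s" if "s \<in> {a..T}" for s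
    using proj_u[OF that] by (simp add: thermistor_rhs_def)
  then have "u t = ua + integral {a..t} (\<lambda>s. G u s / s powr (1 - \<alpha>))" if "t \<in> {a..T}" for t
    using u_eq[OF that] that by (auto intro!: integral_cong)
  moreover have "continuous_on {a..T} (\<lambda>s. G u s / s powr (1 - \<alpha>))"
    using interval(1) by (intro continuous_intros continuous_on_thermistor_rhs u) auto
  ultimately have "(u has_real_derivative G u t / t powr (1 - \<alpha>)) (at t within {a..T})"
    if "t \<in> {a..T}" for t
    using that by (intro integral_equation_has_real_derivative)
  from conf_C_UNIV_conf_deriv_eqI[OF interval continuous_on_thermistor_rhs[OF u] this]
  show ?thesis
    using u_eq[of a] interval in_tube by auto
qed

end

theorem theorem18:
  fixes \<alpha> a T lam ua :: real and f :: "real \<Rightarrow> real \<Rightarrow> real"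
    and v M :: "real \<Rightarrow> real"
  assumes "0 < \<alpha>" "\<alpha> < 1" "0 < a" "a < T" "0 < lam"
    and "continuous_on ({a..T} \<times> UNIV) (\<lambda>(t, x). f t x)"
    and "\<forall>t\<in>{a..T}. \<forall>x. 0 < f t x"
    and "tube_solution \<alpha> a T (thermistor_rhs lam f a T) ua v M"
  shows "\<exists>u. conf_C \<alpha> a T UNIV u \<and>
             (\<forall>t\<in>{a..T}. conf_deriv \<alpha> {a..T} u t = thermistor_rhs lam f a T u t) \<and>
             u a = ua \<and>
             (\<forall>t\<in>{a..T}. \<bar>u t - v t\<bar> \<le> M t)"
proof -
  interpret thermistor_tube \<alpha> a T lam ua f v M
    using assms by unfold_locales auto
  show ?thesis
    by (rule solution_in_tube_exists)
qed

end
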